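(* In $\mathrm{STSym}$, for every generalized Stirling permutation $u$ of positive degree, $$\Delta_+(M_u)=\sum_{i\in\mathrm{GD}(u)}M_{{}^iu}\otimes M_{u^i}.$$
   Context: A generalized Stirling permutation (GSP) of degree $n$ is a planar tree (children of each node linearly ordered, each node a leaf or with $\ge2$ children) with $n+1$ leaves, together with a bijection $\kappa$ from its internal nodes to $\{1,\dots,N\}$ increasing from each internal node to its internal children. Its word $\mathbf w(u)=u_1\cdots u_n$: a leaf has empty word; a node $x$ with children $c_1,\dots,c_k$ has word $\mathbf w(c_1)\kappa(x)\mathbf w(c_2)\cdots\kappa(x)\mathbf w(c_k)$; $u$ is identified with its word (a packed word). For a word $a$, $\mathrm{pack}(a)$ is the packed word with the same relative order of letters. For $0\le i\le n$ with $\{u_1,\dots,u_i\}\cap\{u_{i+1},\dots,u_n\}=\emptyset$ put ${}^iu=\mathrm{pack}(u_1\cdots u_i)$ and $u^i=\mathrm{pack}(u_{i+1}\cdots u_n)$ (these are GSPs; they are the standardized pieces of the allowable lightning splitting of $u$ at leaf $i+1$). $\mathrm{STSym}$ has basis $\{F_u\}$ over GSPs and coproduct $\Delta(F_u)=\sum F_{{}^iu}\otimes F_{u^i}$ over those $i$; $\Delta_+(x)=\Delta(x)-x\otimes 1-1\otimes x$, $1=F_\emptyset$. Planar weak order: for packed words, $w^{-1}(a)=\{p:w_p=a\}$, $\mathrm{iInv}(w)=\{(a,b):a<b,\ \min w^{-1}(a)>\max w^{-1}(b)\}$, $T_a(w)$ = $w$ with letters $a,a+1$ swapped; $\le_{Pw}$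 is the reflexive–transitive closure of: $u$ is covered by $w$ iff $u=T_a(w)$ and $|\mathrm{iInv}(w)|=|\mathrm{iInv}(u)|+1$, restricted to GSPs. The monomial basis is defined by $F_u=\sum_{v\ge_{Pw}u}M_v$. $\mathrm{GD}(u)=\{i\in\{1,\dots,n-1\}: u_a>u_b\text{ for all }a\le i<b\}$. *)

theory Defs
  imports Main
begin

text \<open>Planar trees whose internal nodes carry a natural-number label (the value of kappa).\<close>
datatype ltree = Lf | Nd nat "ltree list"

fun root_label :: "ltree \<Rightarrow> nat option" where
  "root_label Lf = None"
| "root_label (Nd k cs) = Some k"

fun labels :: "ltree \<Rightarrow> nat list" where
  "labels Lf = []"
| "labels (Nd k cs) = k # concat (map labels cs)"

fun wf_tree :: "ltree \<Rightarrow> bool" where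
  "wf_tree Lf = True"
| "wf_tree (Nd k cs) = (2 \<le> length cs \<and>
      list_all (\<lambda>c. wf_tree c \<and> (\<forall>k'. root_label c = Some k' \<longrightarrow> k < k')) cs)"

definition labelled_tree :: "ltree \<Rightarrow> bool" where
  "labelled_tree t \<longleftrightarrow> wf_tree t \<and> distinct (labels t) \<and> set (labels t) = {1..length (labels t)}"

fun joinw :: "nat \<Rightarrow> nat list list \<Rightarrow> nat list" where
  "joinw k [] = []"
| "joinw k [x] = x"
| "joinw k (x # xs) = x @ [k] @ joinw k xs"

fun tword :: "ltree \<Rightarrow> nat list" where
  "tword Lf = []"
| "tword (Nd k cs) = joinw k (map tword cs)"

definition GSP :: "nat list \<Rightarrow> bool" where
  "GSP u \<longleftrightarrow> (\<exists>t. labelled_tree t \<and> tword t = u)"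

definition pack :: "nat list \<Rightarrow> nat list" where
  "pack a = map (\<lambda>x. card {y \<in> set a. y < x} + 1) a"

definition positions :: "nat list \<Rightarrow> nat \<Rightarrow> nat set" where
  "positions w a = {p. p < length w \<and> w ! p = a}"

definition iInv :: "nat list \<Rightarrow> (nat \<times> nat) set" where
  "iInv w = {(a, b). a \<in> set w \<and> b \<in> set w \<and> a < b \<and>
                    Min (positions w a) > Max (positions w b)}"

definition swapT :: "nat \<Rightarrow> nat list \<Rightarrow> nat list" where
  "swapT a w = map (\<lambda>x. if x = a then a + 1 else if x = a + 1 then a else x) w"

definition pw_cover :: "nat list \<Rightarrow> nat list \<Rightarrow> bool" where
  "pw_cover u w \<longleftrightarrow> GSP u \<and> GSP w \<and> (\<exists>a. u = swapT a w) \<and>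
                     card (iInv w) = card (iInv u) + 1"

definition pw_le :: "nat list \<Rightarrow> nat list \<Rightarrow> bool" where
  "pw_le = pw_cover\<^sup>*\<^sup>*"

text \<open>Global descents, with 1-based positions as in the paper.\<close>
definition GD :: "nat list \<Rightarrow> nat set" where
  "GD u = {i \<in> {1..<length u}. \<forall>a b. 1 \<le> a \<and> a \<le> i \<and> i < b \<and> b \<le> length u
                                  \<longrightarrow> u ! (a - 1) > u ! (b - 1)}"

text \<open>Elements of STSym are represented by their coefficient functions in the F-basis
  (indexed by words; only GSPs carry nonzero coefficients); elements of
  STSym \<otimes> STSym by coefficient functions on pairs (F_p \<otimes> F_q).\<close>

type_synonym 'a elt = "nat list \<Rightarrow> 'a"
type_synonym 'a elt2 = "nat list \<times> nat list \<Rightarrow> 'a"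

definition Fb :: "nat list \<Rightarrow> 'a::comm_ring_1 elt" where
  "Fb u = (\<lambda>v. if v = u then 1 else 0)"

definition tens :: "'a::comm_ring_1 elt \<Rightarrow> 'a elt \<Rightarrow> 'a elt2" where
  "tens x y = (\<lambda>(p, q). x p * y q)"

definition Mb :: "nat list \<Rightarrow> 'a::comm_ring_1 elt" where
  "Mb = (THE M. (\<forall>u. \<not> GSP u \<longrightarrow> M u = (\<lambda>_. 0)) \<and>
                (\<forall>u. GSP u \<longrightarrow> Fb u = (\<lambda>x. \<Sum>v\<in>{v. GSP v \<and> pw_le u v}. M v x)))"

definition splits :: "nat list \<Rightarrow> nat set" where
  "splits u = {i. i \<le> length u \<and> set (take i u) \<inter> set (drop i u) = {}}"

definition DeltaF :: "nat list \<Rightarrow> 'a::comm_ring_1 elt2" where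
  "DeltaF u = (\<lambda>(p, q). \<Sum>i\<in>splits u.
       if p = pack (take i u) \<and> q = pack (drop i u) then 1 else 0)"

definition Delta :: "'a::comm_ring_1 elt \<Rightarrow> 'a elt2" where
  "Delta x = (\<lambda>pq. \<Sum>u\<in>{u. GSP u \<and> x u \<noteq> 0}. x u * DeltaF u pq)"

definition Delta_plus :: "'a::comm_ring_1 elt \<Rightarrow> 'a elt2" where
  "Delta_plus x = (\<lambda>pq. Delta x pq - tens x (Fb []) pq - tens (Fb []) x pq)"

end

theory Submission
  imports Defs "HOL-Library.Function_Algebras" "HOL-Combinatorics.Transposition"
begin

text \<open>The GSPs are exactly the packed words satisfying the Stirling condition: every letter
  between two occurrences of \<open>x\<close> is at least \<open>x\<close>.  Since \<open>F_u\<close> is the sum of \<open>M_v\<close> over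
  the upset of \<open>u\<close> in the planar weak order, which is graded by the number of inversions,
  Moebius inversion reduces the claim to
  \<open>\<Sum>v \<ge> u. \<Sum>j global descent of v. M(pack (take j v)) \<otimes> M(pack (drop j v)) = \<Delta>(F_u)\<close>,
  where the trivial splits at both ends of \<open>v\<close> are counted and produce the terms
  \<open>1 \<otimes> M_u + M_u \<otimes> 1\<close>.  This identity comes from a bijection: \<open>(v, j)\<close> is sent to the split
  position \<open>j\<close> of \<open>u\<close> and the packed factors of \<open>v\<close>, which lie above the packed factors
  of \<open>u\<close>.  Conversely \<open>(i, a, b)\<close> comes from the word \<open>a\<close> shifted above \<open>b\<close>, followed by
  \<open>b\<close>; it lies above \<open>u\<close> because \<open>u\<close> can be bubbled up, one cover at a time, to the
  shifted concatenation of its own packed factors.\<close>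

section \<open>Stirling words and planar trees\<close>

fun stirling :: "nat list \<Rightarrow> bool" where
  "stirling [] = True"
| "stirling (x # xs) \<longleftrightarrow> stirling xs \<and>
     (x \<in> set xs \<longrightarrow> (\<forall>y\<in>set (takeWhile (\<lambda>z. z \<noteq> x) xs). x \<le> y))"

lemma stirling_appendD2: "stirling (xs @ ys) \<Longrightarrow> stirling ys"
  by (induction xs) auto

lemma stirling_appendD1: "stirling (xs @ ys) \<Longrightarrow> stirling xs"
  by (induction xs) (auto simp: takeWhile_append1)

lemma stirling_append_disjoint:
  "set xs \<inter> set ys = {} \<Longrightarrow> stirling (xs @ ys) \<longleftrightarrow> stirling xs \<and> stirling ys"
  by (induction xs) (auto simp: takeWhile_append1)

lemma stirling_take: "stirling w \<Longrightarrow> stirling (take i w)"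
  using stirling_appendD1[of "take i w" "drop i w"] by simp

lemma stirling_drop: "stirling w \<Longrightarrow> stirling (drop i w)"
  using stirling_appendD2[of "take i w" "drop i w"] by simp

lemma stirling_le_separator:
  assumes "stirling (xs @ m # ys)" "m \<notin> set xs" "y \<in> set xs" "y \<in> set ys"
  shows "y \<le> m"
  using assms
proof (induction xs)
  case (Cons x xs)
  show ?case
  proof (cases "y = x \<and> x \<notin> set xs")
    case True
    then have "takeWhile (\<lambda>z. z \<noteq> x) (xs @ m # ys) = xs @ m # takeWhile (\<lambda>z. z \<noteq> x) ys"
      using Cons.prems(2) by (induction xs) auto
    then show ?thesis using Cons.prems True by auto
  next
    case False
    then show ?thesis using Cons by auto
  qed
qed simp

lemma stirling_separator_disjoint:
  assumes "stirling (s @ m # r)" "m \<notin> set s" "\<forall>y\<in>set (s @ m # r). m \<le> y"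
  shows "set s \<inter> (set r - {m}) = {}"
proof -
  have False if "y \<in> set s" "y \<in> set r" "y \<noteq> m" for y
  proof -
    have "y \<le> m" "m \<le> y"
      using stirling_le_separator[OF assms(1,2) that(1,2)] assms(3) that(1) by simp_all
    then show False
      using that(3) by simp
  qed
  then show ?thesis
    by blast
qed

lemma takeWhile_neq_map:
  "inj_on f (insert x (set xs)) \<Longrightarrow>
   takeWhile (\<lambda>z. z \<noteq> f x) (map f xs) = map f (takeWhile (\<lambda>z. z \<noteq> x) xs)"
  by (induction xs) (auto simp: inj_on_def)

lemma stirling_map_strict_mono:
  assumes "strict_mono_on (set xs) f"
  shows "stirling (map f xs) \<longleftrightarrow> stirling xs"
  using assms
proof (induction xs)
  case (Cons x xs)
  have mono: "f a < f b" if "a \<in> set (x # xs)" "b \<in> set (x # xs)" "a < b" for a b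
    using Cons.prems that unfolding strict_mono_on_def by blast
  then have inj: "inj_on f (insert x (set xs))"
    by (intro inj_onI) (metis linorder_neqE_nat less_irrefl list.set(2))
  have le_iff: "f a \<le> f b \<longleftrightarrow> a \<le> b" if "a \<in> set (x # xs)" "b \<in> set (x # xs)" for a b
    using mono[OF that] mono[OF that(2,1)] by (metis leD le_less_linear less_imp_le_nat nat_less_le)
  have "stirling (map f xs) \<longleftrightarrow> stirling xs"
    using Cons.IH mono by (simp add: strict_mono_on_def)
  moreover have "f x \<in> f ` set xs \<longleftrightarrow> x \<in> set xs"
    using inj by (auto simp: inj_on_def)
  moreover have "set (takeWhile (\<lambda>z. z \<noteq> x) xs) \<subseteq> set xs"
    by (meson set_takeWhileD subsetI)
  ultimately show ?case
    using le_iff by (auto simp: takeWhile_neq_map[OF inj])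
qed simp

fun disjoint_sets :: "'a set list \<Rightarrow> bool" where
  "disjoint_sets [] = True"
| "disjoint_sets (A # As) \<longleftrightarrow> A \<inter> \<Union>(set As) = {} \<and> disjoint_sets As"

lemma disjoint_sets_labels:
  "distinct (concat (map labels ts)) \<Longrightarrow> disjoint_sets (map (set \<circ> labels) ts)"
  by (induction ts) auto

lemma joinw_Cons: "ys \<noteq> [] \<Longrightarrow> joinw m (x # ys) = x @ m # joinw m ys"
  by (cases ys) auto

lemma stirling_joinw:
  assumes "\<forall>w\<in>set ws. stirling w \<and> (\<forall>x\<in>set w. k < x)" "disjoint_sets (map set ws)"
  shows "stirling (joinw k ws) \<and>
    set (joinw k ws) = \<Union>(set ` set ws) \<union> (if 2 \<le> length ws then {k} else {})"
  using assms
proof (induction k ws rule: joinw.induct)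
  case (3 k x y zs)
  let ?r = "joinw k (y # zs)"
  have IH: "stirling ?r \<and> set ?r = \<Union>(set ` set (y # zs)) \<union> (if 2 \<le> length (y # zs) then {k} else {})"
    using 3 by auto
  have x: "stirling x" "\<forall>a\<in>set x. k < a"
    using "3.prems" by auto
  have "\<forall>a\<in>set ?r. k \<le> a"
    using IH "3.prems" by (auto split: if_splits simp: less_imp_le)
  then have "stirling (k # ?r)"
    using IH by (auto dest: set_takeWhileD)
  moreover have "set x \<inter> set (k # ?r) = {}"
    using IH "3.prems" x(2) by (auto split: if_splits)
  ultimately have "stirling (x @ k # ?r)"
    using stirling_append_disjoint x(1) by auto
  then show ?case
    using IH by auto
qed auto

lemma root_label_in_labels: "root_label t = Some r \<Longrightarrow> r \<in> set (labels t)"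
  by (cases t) auto

lemma stirling_tword:
  assumes "wf_tree t" "distinct (labels t)"
  shows "stirling (tword t) \<and> set (tword t) = set (labels t) \<and>
    (\<forall>r. root_label t = Some r \<longrightarrow> (\<forall>x\<in>set (labels t). r \<le> x))"
  using assms
proof (induction t)
  case (Nd k cs)
  have children: "\<forall>c\<in>set cs. wf_tree c \<and> (\<forall>k'. root_label c = Some k' \<longrightarrow> k < k')"
    using Nd.prems by (simp add: list_all_iff)
  have IH: "\<forall>c\<in>set cs. stirling (tword c) \<and> set (tword c) = set (labels c) \<and>
      (\<forall>r. root_label c = Some r \<longrightarrow> (\<forall>x\<in>set (labels c). r \<le> x))"
    using Nd children by (auto simp: distinct_concat_iff)
  have above: "\<forall>c\<in>set cs. \<forall>x\<in>set (labels c). k < x"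
  proof (intro ballI)
    fix c x assume c: "c \<in> set cs" and x: "x \<in> set (labels c)"
    obtain r cs' where "c = Nd r cs'"
      using x by (cases c) auto
    then show "k < x"
      using children IH c x by (metis order_less_le_trans root_label.simps(2))
  qed
  have "disjoint_sets (map (set \<circ> labels) cs)"
    using Nd.prems(2) disjoint_sets_labels by simp
  moreover have "map (set \<circ> labels) cs = map set (map tword cs)"
    using IH by auto
  ultimately have "disjoint_sets (map set (map tword cs))"
    by simp
  then have "stirling (joinw k (map tword cs)) \<and> set (joinw k (map tword cs)) =
      \<Union>(set ` set (map tword cs)) \<union> (if 2 \<le> length (map tword cs) then {k} else {})"
    using IH above by (intro stirling_joinw) auto
  then show ?case
    using Nd.prems IH above by (auto simp: less_imp_le)
qed simp

text \<open>Cut the word at the first occurrence of \<open>m\<close> and recurse on the rest.  Trees for words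
  shorter than \<open>N\<close> are supplied by the hypothesis, so that the lemma can be used inside the
  induction that constructs trees.\<close>
lemma forest_of_stirling_word:
  assumes trees: "\<And>v. length v < N \<Longrightarrow> stirling v \<Longrightarrow>
      \<exists>t. wf_tree t \<and> distinct (labels t) \<and> tword t = v"
    and "stirling w" "\<forall>y\<in>set w. m \<le> y" "length w \<le> N" "m \<notin> set w \<Longrightarrow> length w < N"
  shows "\<exists>ts. ts \<noteq> [] \<and> joinw m (map tword ts) = w \<and>
      (\<forall>t\<in>set ts. wf_tree t \<and> (\<forall>k. root_label t = Some k \<longrightarrow> m < k)) \<and>
      distinct (concat (map labels ts)) \<and> set (concat (map labels ts)) = set w - {m}"
  using assms(2-)
proof (induction "length w" arbitrary: w rule: less_induct)
  case less
  have root_above: "\<forall>k. root_label t = Some k \<longrightarrow> m < k"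
    if "set (labels t) \<subseteq> set w" "m \<notin> set (labels t)" for t
    using that less.prems(2) root_label_in_labels by (metis le_neq_implies_less subsetD)
  show ?case
  proof (cases "m \<in> set w")
    case False
    then obtain t where t: "wf_tree t" "distinct (labels t)" "tword t = w"
      using trees less.prems by blast
    then have "set (labels t) = set w"
      using stirling_tword by blast
    then show ?thesis
      using t False root_above by (intro exI[of _ "[t]"]) auto
  next
    case True
    then obtain s r where w: "w = s @ m # r" and "m \<notin> set s"
      by (meson split_list_first)
    have "stirling s" "stirling r"
      using less.prems(1) stirling_appendD1 stirling_appendD2 w by (metis append_Cons append_Nil)+
    have "length s < N"
      using less.prems(3) w by simp
    then obtain t where t: "wf_tree t" "distinct (labels t)" "tword t = s"
      using trees \<open>stirling s\<close> by blast
    have t_set: "set (labels t) = set s"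
      using stirling_tword t by blast
    obtain ts where ts: "ts \<noteq> []" "joinw m (map tword ts) = r"
      "\<forall>t\<in>set ts. wf_tree t \<and> (\<forall>k. root_label t = Some k \<longrightarrow> m < k)"
      "distinct (concat (map labels ts))" "set (concat (map labels ts)) = set r - {m}"
      using less.hyps[of r] \<open>stirling r\<close> less.prems w by auto
    have "set s \<inter> (set r - {m}) = {}"
      using stirling_separator_disjoint[of s m r] less.prems(1,2) \<open>m \<notin> set s\<close> by (simp add: w)
    then show ?thesis
      using ts t t_set w \<open>m \<notin> set s\<close> root_above[of t]
      by (intro exI[of _ "t # ts"]) (auto simp: joinw_Cons)
  qed
qed

lemma tree_of_stirling_word:
  "stirling w \<Longrightarrow> \<exists>t. wf_tree t \<and> distinct (labels t) \<and> tword t = w"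
proof (induction "length w" arbitrary: w rule: less_induct)
  case less
  show ?case
  proof (cases "w = []")
    case True
    then show ?thesis by (intro exI[of _ Lf]) auto
  next
    case False
    define m where "m = Min (set w)"
    have "m \<in> set w" "\<forall>y\<in>set w. m \<le> y"
      using False by (simp_all add: m_def)
    then obtain ts where ts: "ts \<noteq> []" "joinw m (map tword ts) = w"
      "\<forall>t\<in>set ts. wf_tree t \<and> (\<forall>k. root_label t = Some k \<longrightarrow> m < k)"
      "distinct (concat (map labels ts))" "set (concat (map labels ts)) = set w - {m}"
      using forest_of_stirling_word[of "length w" w m] less by blast
    have "length ts \<noteq> 1"
    proof
      assume "length ts = 1"
      then obtain t where "ts = [t]"
        by (cases ts) auto
      then have "set w = set w - {m}"
        using ts stirling_tword by auto
      then show False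
        using \<open>m \<in> set w\<close> by blast
    qed
    then have "2 \<le> length ts"
      using ts(1) by (cases "length ts") auto
    then have "wf_tree (Nd m ts)"
      using ts(3) by (auto simp: list_all_iff)
    then show ?thesis
      using ts by (intro exI[of _ "Nd m ts"]) auto
  qed
qed

definition packed :: "nat list \<Rightarrow> bool" where
  "packed u \<longleftrightarrow> set u = {1..card (set u)}"

lemma GSP_iff_stirling_packed: "GSP u \<longleftrightarrow> stirling u \<and> packed u"
proof
  assume "GSP u"
  then obtain t where t: "labelled_tree t" "tword t = u"
    by (auto simp: GSP_def)
  then have "stirling u" "set u = set (labels t)" "card (set (labels t)) = length (labels t)"
    using stirling_tword by (auto simp: labelled_tree_def distinct_card)
  then show "stirling u \<and> packed u"
    using t by (auto simp: labelled_tree_def packed_def)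
next
  assume u: "stirling u \<and> packed u"
  then obtain t where t: "wf_tree t" "distinct (labels t)" "tword t = u"
    using tree_of_stirling_word by blast
  then have "set (labels t) = set u" "card (set (labels t)) = length (labels t)"
    using stirling_tword distinct_card by blast+
  then have "labelled_tree t"
    using t u by (auto simp: labelled_tree_def packed_def)
  then show "GSP u"
    using t by (auto simp: GSP_def)
qed

section \<open>Packing\<close>

definition rank :: "nat set \<Rightarrow> nat \<Rightarrow> nat" where
  "rank A x = card {y \<in> A. y < x} + 1"

lemma pack_eq_map_rank: "pack a = map (rank (set a)) a"
  by (simp add: pack_def rank_def)

lemma length_pack [simp]: "length (pack a) = length a"
  by (simp add: pack_def)

lemma pack_Nil [simp]: "pack [] = []"
  by (simp add: pack_def)

lemma nth_pack: "i < length a \<Longrightarrow> pack a ! i = rank (set a) (a ! i)"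
  by (simp add: pack_eq_map_rank)

lemma rank_strict_mono: "finite A \<Longrightarrow> x \<in> A \<Longrightarrow> x < y \<Longrightarrow> rank A x < rank A y"
  unfolding rank_def by (rule add_less_mono1, rule psubset_card_mono) auto

lemma rank_le_card: "finite A \<Longrightarrow> x \<in> A \<Longrightarrow> rank A x \<le> card A"
proof -
  assume "finite A" "x \<in> A"
  then have "card {y \<in> A. y < x} < card A"
    by (intro psubset_card_mono) auto
  then show ?thesis
    by (simp add: rank_def)
qed

lemma inj_on_rank: "finite A \<Longrightarrow> inj_on (rank A) A"
  by (rule inj_onI) (metis linorder_neqE_nat rank_strict_mono less_irrefl)

lemma rank_image: "finite A \<Longrightarrow> rank A ` A = {1..card A}"
proof -
  assume A: "finite A"
  have "rank A ` A \<subseteq> {1..card A}"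
    using rank_le_card[OF A] by (auto simp: rank_def)
  moreover have "card (rank A ` A) = card A"
    using card_image[OF inj_on_rank[OF A]] .
  ultimately show ?thesis
    by (intro card_subset_eq) auto
qed

lemma rank_Suc:
  assumes "finite A" "a \<in> A" "Suc a \<in> A"
  shows "rank A (Suc a) = Suc (rank A a)"
proof -
  have "{y \<in> A. y < Suc a} = insert a {y \<in> A. y < a}"
    using assms by auto
  then show ?thesis
    using assms(1) by (simp add: rank_def)
qed

lemma rank_image_strict_mono:
  assumes "strict_mono_on A f" "finite A" "x \<in> A"
  shows "rank (f ` A) (f x) = rank A x"
proof -
  have "inj_on f A"
    using assms(1) strict_mono_on_imp_inj_on by blast
  moreover have "{z \<in> f ` A. z < f x} = f ` {z \<in> A. z < x}"
  proof (intro equalityI subsetI)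
    fix z assume "z \<in> {z \<in> f ` A. z < f x}"
    then obtain y where y: "y \<in> A" "z = f y" "f y < f x"
      by blast
    then have "y < x"
      using assms(1,3) by (metis linorder_neqE_nat not_less_iff_gr_or_eq strict_mono_onD)
    then show "z \<in> f ` {z \<in> A. z < x}"
      using y by blast
  qed (use assms(1,3) strict_mono_onD in blast)
  ultimately show ?thesis
    by (simp add: rank_def card_image inj_on_subset)
qed

lemma set_pack: "set (pack a) = {1..card (set a)}"
  by (simp add: pack_eq_map_rank rank_image)

lemma card_set_pack: "card (set (pack a)) = card (set a)"
  by (simp add: set_pack)

lemma packed_pack: "packed (pack a)"
  by (simp add: packed_def set_pack)

lemma pack_map_strict_mono: "strict_mono_on (set a) f \<Longrightarrow> pack (map f a) = pack a"
  by (simp add: pack_eq_map_rank rank_image_strict_mono)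

lemma pack_packed: "packed a \<Longrightarrow> pack a = a"
proof -
  assume "packed a"
  then obtain c where c: "set a = {1..c}"
    by (auto simp: packed_def)
  have "rank (set a) x = x" if "x \<in> set a" for x
  proof -
    have "{y \<in> {1..c}. y < x} = {1..<x}"
      using that c by auto
    then show ?thesis
      using that c by (simp add: rank_def)
  qed
  then show ?thesis
    by (simp add: pack_eq_map_rank map_idI)
qed

lemma stirling_pack: "stirling (pack a) \<longleftrightarrow> stirling a"
  unfolding pack_eq_map_rank
  by (rule stirling_map_strict_mono) (simp add: strict_mono_onI rank_strict_mono)

lemma GSP_pack: "GSP (pack a) \<longleftrightarrow> stirling a"
  by (simp add: GSP_iff_stirling_packed stirling_pack packed_pack)

lemma GSP_stirling: "GSP u \<Longrightarrow> stirling u"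
  by (simp add: GSP_iff_stirling_packed)

lemma GSP_set: "GSP u \<Longrightarrow> set u = {1..card (set u)}"
  by (simp add: GSP_iff_stirling_packed packed_def)

lemma GSP_pack_eq: "GSP u \<Longrightarrow> pack u = u"
  by (simp add: GSP_iff_stirling_packed pack_packed)

lemma GSP_Nil: "GSP []"
  by (simp add: GSP_iff_stirling_packed packed_def)

lemma GSP_pack_take: "GSP u \<Longrightarrow> GSP (pack (take i u))"
  by (simp add: GSP_pack GSP_stirling stirling_take)

lemma GSP_pack_drop: "GSP u \<Longrightarrow> GSP (pack (drop i u))"
  by (simp add: GSP_pack GSP_stirling stirling_drop)

section \<open>The planar weak order\<close>

abbreviation adj_swap :: "nat \<Rightarrow> nat \<Rightarrow> nat" where
  "adj_swap a \<equiv> transpose a (Suc a)"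

lemma swapT_eq_map: "swapT a w = map (adj_swap a) w"
  by (simp add: swapT_def transpose_def)

lemma transpose_eq_iff_eq_transpose: "transpose a b x = y \<longleftrightarrow> x = transpose a b y"
  by (metis transpose_involutory)

lemma adj_swap_strict_mono: "c < d \<Longrightarrow> (c, d) \<noteq> (a, Suc a) \<Longrightarrow> adj_swap a c < adj_swap a d"
  by (auto simp: transpose_def)

lemma strict_mono_on_adj_swap:
  "\<not> (a \<in> A \<and> Suc a \<in> A) \<Longrightarrow> strict_mono_on A (adj_swap a)"
  by (rule strict_mono_onI) (metis adj_swap_strict_mono prod.inject)

definition all_before :: "nat list \<Rightarrow> nat \<Rightarrow> nat \<Rightarrow> bool" where
  "all_before w b a \<longleftrightarrow>
     (\<forall>p q. p < length w \<longrightarrow> q < length w \<longrightarrow> w ! p = b \<longrightarrow> w ! q = a \<longrightarrow> p < q)"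

lemma all_before_take: "all_before w b a \<Longrightarrow> all_before (take i w) b a"
  by (simp add: all_before_def)

lemma all_before_drop: "all_before w b a \<Longrightarrow> all_before (drop i w) b a"
  unfolding all_before_def
proof (intro allI impI)
  fix p q
  assume h: "\<forall>p q. p < length w \<longrightarrow> q < length w \<longrightarrow> w ! p = b \<longrightarrow> w ! q = a \<longrightarrow> p < q"
    and "p < length (drop i w)" "q < length (drop i w)" "drop i w ! p = b" "drop i w ! q = a"
  then have "i + p < i + q"
    using h[rule_format, of "i + p" "i + q"] by simp
  then show "p < q"
    by simp
qed

lemma all_before_map_transpose:
  "all_before (map (transpose a b) w) d c \<longleftrightarrow> all_before w (transpose a b d) (transpose a b c)"
  unfolding all_before_def by (simp add: transpose_eq_iff_eq_transpose)

lemma iInv_iff: "(x, y) \<in> iInv w \<longleftrightarrow> x \<in> set w \<and> y \<in> set w \<and> x < y \<and> all_before w y x"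
proof -
  have "finite (positions w a)" "a \<in> set w \<Longrightarrow> positions w a \<noteq> {}" for a
    by (auto simp: positions_def in_set_conv_nth)
  then have "x \<in> set w \<Longrightarrow> y \<in> set w \<Longrightarrow>
      Max (positions w y) < Min (positions w x) \<longleftrightarrow> all_before w y x"
    by (simp add: Max_less_iff Min_gr_iff) (auto simp: all_before_def positions_def)
  then show ?thesis
    by (auto simp: iInv_def)
qed

lemma finite_iInv: "finite (iInv w)"
  by (rule finite_subset[of _ "set w \<times> set w"]) (auto simp: iInv_iff)

lemma iInv_map_adj_swap:
  "(c, d) \<in> iInv (map (adj_swap a) w) \<longleftrightarrow>
     c < d \<and> adj_swap a c \<in> set w \<and> adj_swap a d \<in> set w \<and>
     all_before w (adj_swap a d) (adj_swap a c)"
proof -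
  have "z \<in> set (map (adj_swap a) w) \<longleftrightarrow> adj_swap a z \<in> set w" for z
    by (simp add: image_iff) (metis transpose_involutory)
  then show ?thesis
    by (auto simp: iInv_iff all_before_map_transpose)
qed

lemma iInv_map_adj_swap_Diff:
  "iInv (map (adj_swap a) w) - {(a, Suc a)} =
     map_prod (adj_swap a) (adj_swap a) ` (iInv w - {(a, Suc a)})"
proof (intro equalityI subsetI)
  have pair_ne: "(adj_swap a c, adj_swap a d) \<noteq> (a, Suc a)" if "c < d" for c d
    using that by (auto simp: transpose_def split: if_splits)
  {
    fix cd assume cd: "cd \<in> iInv (map (adj_swap a) w) - {(a, Suc a)}"
    obtain c d where [simp]: "cd = (c, d)"
      by (cases cd)
    have h: "c < d" "adj_swap a c \<in> set w" "adj_swap a d \<in> set w"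
      "all_before w (adj_swap a d) (adj_swap a c)" "(c, d) \<noteq> (a, Suc a)"
      using cd iInv_map_adj_swap by auto
    then have "(adj_swap a c, adj_swap a d) \<in> iInv w - {(a, Suc a)}"
      using adj_swap_strict_mono pair_ne by (simp add: iInv_iff)
    then show "cd \<in> map_prod (adj_swap a) (adj_swap a) ` (iInv w - {(a, Suc a)})"
      by (metis \<open>cd = (c, d)\<close> image_eqI map_prod_simp transpose_involutory)
  next
    fix cd assume "cd \<in> map_prod (adj_swap a) (adj_swap a) ` (iInv w - {(a, Suc a)})"
    then obtain x y where xy: "(x, y) \<in> iInv w" "(x, y) \<noteq> (a, Suc a)"
      and cd: "cd = (adj_swap a x, adj_swap a y)"
      by auto
    then have h: "x < y" "x \<in> set w" "y \<in> set w" "all_before w y x"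
      by (simp_all add: iInv_iff)
    moreover have "adj_swap a x < adj_swap a y"
      using h(1) xy(2) by (rule adj_swap_strict_mono)
    ultimately show "cd \<in> iInv (map (adj_swap a) w) - {(a, Suc a)}"
      using cd pair_ne[OF h(1)] by (simp add: iInv_map_adj_swap)
  }
qed

lemma adj_inversion_not_both:
  assumes "(a, Suc a) \<in> iInv (map (adj_swap a) w)"
  shows "(a, Suc a) \<notin> iInv w"
proof
  assume "(a, Suc a) \<in> iInv w"
  then have in_w: "a \<in> set w" "Suc a \<in> set w" and "all_before w (Suc a) a"
    by (auto simp: iInv_iff)
  moreover have "all_before w a (Suc a)"
    using assms by (simp add: iInv_map_adj_swap)
  moreover obtain p q where "p < length w" "q < length w" "w ! p = a" "w ! q = Suc a"
    using in_w by (metis in_set_conv_nth)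
  ultimately have "q < p" "p < q"
    unfolding all_before_def by blast+
  then show False
    by simp
qed

lemma card_iInv_map_adj_swap:
  "card (iInv (map (adj_swap a) w)) + (if (a, Suc a) \<in> iInv w then 1 else 0) =
   card (iInv w) + (if (a, Suc a) \<in> iInv (map (adj_swap a) w) then 1 else 0)"
proof -
  have split: "card A = card (A - {p}) + (if p \<in> A then 1 else 0)" if "finite A" for A and p :: "nat \<times> nat"
    using that card_Suc_Diff1[of A p] by (cases "p \<in> A") simp_all
  have "inj (map_prod (adj_swap a) (adj_swap a))"
    using map_prod_inj_on[OF inj_transpose inj_transpose] by simp
  then have "card (iInv (map (adj_swap a) w) - {(a, Suc a)}) = card (iInv w - {(a, Suc a)})"
    unfolding iInv_map_adj_swap_Diff by (simp add: card_image inj_on_subset)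
  then show ?thesis
    using split[OF finite_iInv, of w "(a, Suc a)"]
      split[OF finite_iInv, of "map (adj_swap a) w" "(a, Suc a)"] by linarith
qed

lemma pw_cover_iff:
  "pw_cover u w \<longleftrightarrow> GSP u \<and> GSP w \<and> (\<exists>a. u = map (adj_swap a) w \<and> (a, Suc a) \<in> iInv w)"
proof -
  have "card (iInv w) = card (iInv (map (adj_swap a) w)) + 1 \<longleftrightarrow> (a, Suc a) \<in> iInv w" for a
    using card_iInv_map_adj_swap[of a w] adj_inversion_not_both[of a w]
    by (cases "(a, Suc a) \<in> iInv w") auto
  then show ?thesis
    unfolding pw_cover_def swapT_eq_map by auto
qed

lemma pw_le_refl [simp]: "pw_le u u"
  by (simp add: pw_le_def)

lemma pw_le_trans [trans]: "pw_le u v \<Longrightarrow> pw_le v w \<Longrightarrow> pw_le u w"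
  by (simp add: pw_le_def)

lemma pw_cover_imp_pw_le: "pw_cover u v \<Longrightarrow> pw_le u v"
  by (simp add: pw_le_def)

lemma pw_le_image:
  assumes "\<And>y z. pw_cover y z \<Longrightarrow> pw_le (f y) (f z)" and "pw_le u v"
  shows "pw_le (f u) (f v)"
  using assms(2) unfolding pw_le_def
proof (induction rule: rtranclp_induct)
  case (step y z)
  then show ?case
    using assms(1) pw_le_trans by (auto simp: pw_le_def)
qed simp

definition same_pattern :: "nat list \<Rightarrow> nat list \<Rightarrow> bool" where
  "same_pattern u v \<longleftrightarrow> length u = length v \<and>
     (\<forall>i<length u. \<forall>j<length u. u ! i = u ! j \<longleftrightarrow> v ! i = v ! j)"

lemma pw_leD:
  assumes "pw_le u v" "GSP u"
  shows "GSP v \<and> same_pattern u v \<and> (u = v \<or> card (iInv u) < card (iInv v))"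
  using assms unfolding pw_le_def
proof (induction rule: rtranclp_induct)
  case (step y z)
  obtain a where "y = map (adj_swap a) z" "GSP z"
    using step.hyps(2) pw_cover_iff by blast
  then have "same_pattern y z"
    by (auto simp: same_pattern_def transpose_eq_iff_eq_transpose)
  moreover have "card (iInv y) < card (iInv z)"
    using step.hyps(2) by (simp add: pw_cover_def)
  ultimately show ?case
    using step.IH step.prems \<open>GSP z\<close> by (auto simp: same_pattern_def)
qed (simp add: same_pattern_def)

lemma pw_le_length: "pw_le u v \<Longrightarrow> GSP u \<Longrightarrow> length v = length u"
  using pw_leD by (simp add: same_pattern_def)

lemma pw_le_card_set:
  assumes "pw_le u v"
  shows "card (set v) = card (set u)"
  using assms unfolding pw_le_def
proof (induction rule: rtranclp_induct)
  case (step y z)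
  obtain a where "y = map (adj_swap a) z"
    using step.hyps(2) pw_cover_iff by blast
  then show ?case
    using step.IH by (simp add: card_image)
qed simp

lemma pack_map_adj_swap:
  assumes "a \<in> set x" "Suc a \<in> set x"
  shows "pack (map (adj_swap a) x) = map (adj_swap (rank (set x) a)) (pack x)"
proof -
  define A where "A = set x"
  have A: "finite A" "a \<in> A" "Suc a \<in> A"
    using assms by (simp_all add: A_def)
  have "rank A (adj_swap a z) = adj_swap (rank A a) (rank A z)" if "z \<in> A" for z
  proof (cases "z = a \<or> z = Suc a")
    case True
    then show ?thesis
      using rank_Suc[OF A] by auto
  next
    case False
    then have "rank A z \<noteq> rank A a" "rank A z \<noteq> Suc (rank A a)"
      using inj_on_rank[OF A(1)] that A rank_Suc[OF A] by (metis inj_on_eq_iff)+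
    then show ?thesis
      using False by simp
  qed
  moreover have "set (map (adj_swap a) x) = A"
    using A by (simp add: A_def)
  ultimately show ?thesis
    by (simp add: pack_eq_map_rank A_def)
qed

text \<open>A cover swaps \<open>a, Suc a\<close> where every \<open>Suc a\<close> precedes every \<open>a\<close>; restricted to a
  factor of the word, this swap is either invisible after packing or again a cover.\<close>
lemma pw_le_pack_map_adj_swap:
  assumes stirling: "stirling x" "stirling (map (adj_swap a) x)"
    and before: "a \<in> set x \<Longrightarrow> Suc a \<in> set x \<Longrightarrow> all_before x (Suc a) a"
  shows "pw_le (pack (map (adj_swap a) x)) (pack x)"
proof (cases "a \<in> set x \<and> Suc a \<in> set x")
  case False
  then have "pack (map (adj_swap a) x) = pack x"
    by (simp add: pack_map_strict_mono strict_mono_on_adj_swap)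
  then show ?thesis
    by simp
next
  case True
  define a' where "a' = rank (set x) a"
  have rank_Suc_a: "rank (set x) (Suc a) = Suc a'"
    using rank_Suc True by (simp add: a'_def)
  have "all_before (pack x) (Suc a') a'"
    unfolding all_before_def
  proof (intro allI impI)
    fix p q assume "p < length (pack x)" "q < length (pack x)" "pack x ! p = Suc a'" "pack x ! q = a'"
    then have "rank (set x) (x ! p) = rank (set x) (Suc a)" "rank (set x) (x ! q) = rank (set x) a"
      using rank_Suc_a by (simp_all add: nth_pack a'_def)
    then have "x ! p = Suc a" "x ! q = a"
      using inj_on_rank[of "set x"] True \<open>p < length (pack x)\<close> \<open>q < length (pack x)\<close>
      by (simp_all add: inj_on_eq_iff)
    then show "p < q"
      using before True \<open>p < length (pack x)\<close> \<open>q < length (pack x)\<close>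
      by (simp add: all_before_def)
  qed
  moreover have "a' \<in> set (pack x)" "Suc a' \<in> set (pack x)"
    using True rank_Suc_a by (metis a'_def image_eqI list.set_map pack_eq_map_rank)+
  ultimately have "(a', Suc a') \<in> iInv (pack x)"
    by (simp add: iInv_iff)
  moreover have "GSP (pack (map (adj_swap a) x))" "GSP (pack x)"
    using stirling by (simp_all add: GSP_pack)
  ultimately have "pw_cover (pack (map (adj_swap a) x)) (pack x)"
    using pack_map_adj_swap[of a x] True pw_cover_iff by (auto simp: a'_def)
  then show ?thesis
    by (rule pw_cover_imp_pw_le)
qed

lemma pw_cover_pack_take:
  assumes "pw_cover y z"
  shows "pw_le (pack (take i y)) (pack (take i z))"
proof -
  obtain a where a: "y = map (adj_swap a) z" "(a, Suc a) \<in> iInv z" "GSP y" "GSP z"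
    using assms pw_cover_iff by blast
  then have "stirling (take i z)" "stirling (map (adj_swap a) (take i z))"
    using GSP_stirling stirling_take by (metis take_map)+
  moreover have "all_before (take i z) (Suc a) a"
    using a(2) by (simp add: iInv_iff all_before_take)
  ultimately show ?thesis
    using pw_le_pack_map_adj_swap a(1) by (simp add: take_map)
qed

lemma pw_le_pack_take: "pw_le u v \<Longrightarrow> pw_le (pack (take i u)) (pack (take i v))"
  using pw_le_image[of "\<lambda>w. pack (take i w)" u v] pw_cover_pack_take by blast

lemma pw_cover_pack_drop:
  assumes "pw_cover y z"
  shows "pw_le (pack (drop i y)) (pack (drop i z))"
proof -
  obtain a where a: "y = map (adj_swap a) z" "(a, Suc a) \<in> iInv z" "GSP y" "GSP z"
    using assms pw_cover_iff by blast
  then have "stirling (drop i z)" "stirling (map (adj_swap a) (drop i z))"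
    using GSP_stirling stirling_drop by (metis drop_map)+
  moreover have "all_before (drop i z) (Suc a) a"
    using a(2) by (simp add: iInv_iff all_before_drop)
  ultimately show ?thesis
    using pw_le_pack_map_adj_swap a(1) by (simp add: drop_map)
qed

lemma pw_le_pack_drop: "pw_le u v \<Longrightarrow> pw_le (pack (drop i u)) (pack (drop i v))"
  using pw_le_image[of "\<lambda>w. pack (drop i w)" u v] pw_cover_pack_drop by blast

section \<open>Concatenation at a global descent\<close>

definition shift :: "nat \<Rightarrow> nat list \<Rightarrow> nat list" where
  "shift k a = map (\<lambda>x. x + k) a"

lemma length_shift [simp]: "length (shift k a) = length a"
  by (simp add: shift_def)

lemma set_shift: "set (shift k a) = (\<lambda>x. x + k) ` set a"
  by (simp add: shift_def)

lemma GSP_letter_bounds: "GSP u \<Longrightarrow> x \<in> set u \<Longrightarrow> 1 \<le> x \<and> x \<le> card (set u)"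
  using GSP_set by fastforce

lemma GSP_shift_append:
  assumes a: "GSP a" and b: "GSP b"
  shows "GSP (shift (card (set b)) a @ b)"
proof -
  define k where "k = card (set b)"
  have "set (shift k a) = {k + 1..card (set a) + k}"
    unfolding set_shift by (subst GSP_set[OF a]) auto
  moreover have "set b = {1..k}"
    using GSP_set[OF b] by (simp add: k_def)
  ultimately have "set (shift k a) \<inter> set b = {}" "set (shift k a @ b) = {1..card (set a) + k}"
    by auto
  moreover have "stirling (shift k a)"
    unfolding shift_def using a by (simp add: stirling_map_strict_mono strict_mono_onI GSP_stirling)
  ultimately show ?thesis
    using GSP_stirling[OF b] stirling_append_disjoint
    by (simp add: GSP_iff_stirling_packed packed_def k_def)
qed

text \<open>Split positions are 0-based here and, unlike in \<^const>\<open>GD\<close>, the trivial splits \<open>0\<close> and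
  \<open>length v\<close> are allowed.\<close>
definition global_descent :: "nat \<Rightarrow> nat list \<Rightarrow> bool" where
  "global_descent i v \<longleftrightarrow> (\<forall>x\<in>set (take i v). \<forall>y\<in>set (drop i v). y < x)"

lemma global_descent_disjoint: "global_descent i v \<Longrightarrow> set (take i v) \<inter> set (drop i v) = {}"
  unfolding global_descent_def by (meson disjoint_iff less_irrefl)

lemma nth_in_set_take: "p < i \<Longrightarrow> p < length u \<Longrightarrow> u ! p \<in> set (take i u)"
  using nth_mem[of p "take i u"] by simp

lemma nth_in_set_drop: "i \<le> p \<Longrightarrow> p < length u \<Longrightarrow> u ! p \<in> set (drop i u)"
  using nth_mem[of "p - i" "drop i u"] by simp

lemma global_descent_iff_nth:
  "global_descent j u \<longleftrightarrow> (\<forall>p q. p < j \<longrightarrow> j \<le> q \<longrightarrow> q < length u \<longrightarrow> u ! q < u ! p)"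
proof
  assume h: "global_descent j u"
  show "\<forall>p q. p < j \<longrightarrow> j \<le> q \<longrightarrow> q < length u \<longrightarrow> u ! q < u ! p"
  proof (intro allI impI)
    fix p q assume "p < j" "j \<le> q" "q < length u"
    then have "u ! p \<in> set (take j u)" "u ! q \<in> set (drop j u)"
      by (simp_all add: nth_in_set_take nth_in_set_drop)
    then show "u ! q < u ! p"
      using h by (simp add: global_descent_def)
  qed
next
  assume h: "\<forall>p q. p < j \<longrightarrow> j \<le> q \<longrightarrow> q < length u \<longrightarrow> u ! q < u ! p"
  show "global_descent j u"
    unfolding global_descent_def
  proof (intro ballI)
    fix x y assume "x \<in> set (take j u)" "y \<in> set (drop j u)"
    then obtain p q where "p < min j (length u)" "u ! p = x" "q < length u - j" "u ! (j + q) = y"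
      by (auto simp: in_set_conv_nth)
    then show "y < x"
      using h[rule_format, of p "j + q"] by simp
  qed
qed

lemma set_take_Un_drop: "set (take i v) \<union> set (drop i v) = set v"
  by (metis append_take_drop_id set_append)

lemma downward_closed_eq_atLeastAtMost:
  assumes "finite R" "\<forall>y\<in>R. 1 \<le> y" "\<forall>y\<in>R. \<forall>z. 1 \<le> z \<longrightarrow> z \<le> y \<longrightarrow> z \<in> R"
  shows "R = {1..card R}"
proof (cases "R = {}")
  case False
  have R: "R = {1..Max R}"
  proof (intro equalityI subsetI)
    fix y assume "y \<in> R"
    then show "y \<in> {1..Max R}"
      using assms(1,2) by simp
  next
    fix z assume "z \<in> {1..Max R}"
    then show "z \<in> R"
      using assms(3) Max_in[OF assms(1) False] by auto
  qed
  moreover have "card R = Max R"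
    using arg_cong[OF R, of card] by simp
  ultimately show ?thesis
    by simp
qed simp

lemma global_descent_decomp:
  assumes v: "GSP v" and "global_descent i v"
  shows "v = shift (card (set (drop i v))) (pack (take i v)) @ pack (drop i v)"
proof -
  define L R where "L = set (take i v)" and "R = set (drop i v)"
  define m k where "m = card (set v)" and "k = card R"
  have LR: "L \<union> R = {1..m}"
    using GSP_set[OF v] set_take_Un_drop[of i v] by (simp add: L_def R_def m_def k_def)
  have less: "\<forall>x\<in>L. \<forall>y\<in>R. y < x"
    using assms(2) by (simp add: global_descent_def L_def R_def)
  have R: "R = {1..k}"
    unfolding m_def k_def
  proof (rule downward_closed_eq_atLeastAtMost)
    show "\<forall>y\<in>R. \<forall>z. 1 \<le> z \<longrightarrow> z \<le> y \<longrightarrow> z \<in> R"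
    proof (intro ballI allI impI)
      fix y z assume "y \<in> R" "1 \<le> z" "z \<le> y"
      moreover have "y \<in> {1..m}"
        using \<open>y \<in> R\<close> LR by blast
      ultimately have "z \<in> {1..m}" "z \<notin> L"
        using less by (auto dest: leD)
      then show "z \<in> R"
        using LR by blast
    qed
  qed (use LR in \<open>auto simp: L_def R_def\<close>)
  have L: "L = {k + 1..m}"
  proof (intro equalityI subsetI)
    fix x assume "x \<in> L"
    then have "x \<notin> R"
      using less by blast
    then show "x \<in> {k + 1..m}"
      using \<open>x \<in> L\<close> LR R by auto
  qed (use LR R in auto)
  have "pack (drop i v) = drop i v"
    by (rule pack_packed) (simp add: packed_def L_def[symmetric] R_def[symmetric] R)
  moreover have "rank L x + k = x" if "x \<in> L" for x
  proof -
    have "{y \<in> L. y < x} = {k + 1..<x}"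
      using that L by auto
    then show ?thesis
      using that L by (simp add: rank_def)
  qed
  then have "map (\<lambda>x. rank L x + k) (take i v) = take i v"
    by (simp add: map_idI L_def)
  then have "shift k (pack (take i v)) = take i v"
    by (simp add: pack_eq_map_rank shift_def L_def[symmetric] comp_def)
  ultimately show ?thesis
    by (simp add: m_def k_def L_def R_def)
qed

lemma nth_append_in_left:
  assumes "p < length (xs @ ys)" "(xs @ ys) ! p \<notin> set ys"
  shows "p < length xs \<and> (xs @ ys) ! p = xs ! p"
proof (cases "p < length xs")
  case False
  then have "(xs @ ys) ! p \<in> set ys"
    using assms(1) by (simp add: nth_append)
  then show ?thesis
    using assms(2) by blast
qed (simp add: nth_append)

lemma nth_append_in_right:
  assumes "p < length (xs @ ys)" "(xs @ ys) ! p \<notin> set xs"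
  shows "length xs \<le> p \<and> (xs @ ys) ! p = ys ! (p - length xs)"
proof (cases "p < length xs")
  case True
  then have "(xs @ ys) ! p \<in> set xs"
    by (simp add: nth_append)
  then show ?thesis
    using assms(2) by blast
qed (simp add: nth_append)

lemma all_before_append_left:
  assumes "a \<notin> set ys" "b \<notin> set ys"
  shows "all_before (xs @ ys) b a \<longleftrightarrow> all_before xs b a"
  unfolding all_before_def
proof (intro iffI allI impI)
  fix p q
  assume h: "\<forall>p q. p < length (xs @ ys) \<longrightarrow> q < length (xs @ ys) \<longrightarrow>
      (xs @ ys) ! p = b \<longrightarrow> (xs @ ys) ! q = a \<longrightarrow> p < q"
    and "p < length xs" "q < length xs" "xs ! p = b" "xs ! q = a"
  then show "p < q"
    using h[rule_format, of p q] by (simp add: nth_append)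
next
  fix p q
  assume h: "\<forall>p q. p < length xs \<longrightarrow> q < length xs \<longrightarrow> xs ! p = b \<longrightarrow> xs ! q = a \<longrightarrow> p < q"
    and pq: "p < length (xs @ ys)" "q < length (xs @ ys)" "(xs @ ys) ! p = b" "(xs @ ys) ! q = a"
  have "(xs @ ys) ! p \<notin> set ys" "(xs @ ys) ! q \<notin> set ys"
    using assms pq(3,4) by simp_all
  then have "p < length xs \<and> xs ! p = b" "q < length xs \<and> xs ! q = a"
    using nth_append_in_left[OF pq(1)] nth_append_in_left[OF pq(2)] pq(3,4) by auto
  then show "p < q"
    using h by blast
qed

lemma all_before_append_right:
  assumes "a \<notin> set xs" "b \<notin> set xs"
  shows "all_before (xs @ ys) b a \<longleftrightarrow> all_before ys b a"
  unfolding all_before_def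
proof (intro iffI allI impI)
  fix p q
  assume h: "\<forall>p q. p < length (xs @ ys) \<longrightarrow> q < length (xs @ ys) \<longrightarrow>
      (xs @ ys) ! p = b \<longrightarrow> (xs @ ys) ! q = a \<longrightarrow> p < q"
    and "p < length ys" "q < length ys" "ys ! p = b" "ys ! q = a"
  then show "p < q"
    using h[rule_format, of "length xs + p" "length xs + q"] by simp
next
  fix p q
  assume h: "\<forall>p q. p < length ys \<longrightarrow> q < length ys \<longrightarrow> ys ! p = b \<longrightarrow> ys ! q = a \<longrightarrow> p < q"
    and pq: "p < length (xs @ ys)" "q < length (xs @ ys)" "(xs @ ys) ! p = b" "(xs @ ys) ! q = a"
  have "(xs @ ys) ! p \<notin> set xs" "(xs @ ys) ! q \<notin> set xs"
    using assms pq(3,4) by simp_all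
  then have "length xs \<le> p" "ys ! (p - length xs) = b" "length xs \<le> q" "ys ! (q - length xs) = a"
    using nth_append_in_right[OF pq(1)] nth_append_in_right[OF pq(2)] pq(3,4) by auto
  moreover have "p - length xs < length ys" "q - length xs < length ys"
    using pq(1,2) calculation by auto
  ultimately show "p < q"
    using h[rule_format, of "p - length xs" "q - length xs"] by simp
qed

lemma all_before_map_inj:
  "inj f \<Longrightarrow> all_before (map f w) (f b) (f a) \<longleftrightarrow> all_before w b a"
  by (simp add: all_before_def inj_eq)

lemma pw_cover_shift_append_left:
  assumes "pw_cover y z" "GSP b"
  shows "pw_cover (shift (card (set b)) y @ b) (shift (card (set b)) z @ b)"
proof -
  define k where "k = card (set b)"
  obtain c where c: "y = map (adj_swap c) z" "(c, Suc c) \<in> iInv z" "GSP y" "GSP z"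
    using assms(1) pw_cover_iff by blast
  have cz: "c \<in> set z" "Suc c \<in> set z" "all_before z (Suc c) c"
    using c(2) by (auto simp: iInv_iff)
  have "1 \<le> c"
    using cz GSP_letter_bounds[OF c(4)] by blast
  moreover have b_small: "\<forall>v\<in>set b. v \<le> k"
    using GSP_letter_bounds[OF assms(2)] by (simp add: k_def)
  ultimately have "map (adj_swap (c + k)) b = b"
    by (intro map_idI) (fastforce simp: transpose_def)
  moreover have "shift k y = map (adj_swap (c + k)) (shift k z)"
    by (simp add: c(1) shift_def transpose_def)
  ultimately have swap: "shift k y @ b = map (adj_swap (c + k)) (shift k z @ b)"
    by simp
  have "c + k \<notin> set b" "Suc (c + k) \<notin> set b"
    using b_small \<open>1 \<le> c\<close> by fastforce+
  moreover have "all_before (shift k z) (Suc (c + k)) (c + k)"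
    using cz(3) all_before_map_inj[of "\<lambda>x. x + k" z "Suc c" c] by (simp add: shift_def inj_def)
  ultimately have "(c + k, Suc (c + k)) \<in> iInv (shift k z @ b)"
    using cz by (simp add: iInv_iff all_before_append_left set_shift)
  moreover have "GSP (shift k y @ b)" "GSP (shift k z @ b)"
    using GSP_shift_append c(3,4) assms(2) by (simp_all add: k_def)
  ultimately show ?thesis
    using swap pw_cover_iff by (auto simp: k_def)
qed

lemma pw_cover_shift_append_right:
  assumes "pw_cover y z" "GSP a"
  shows "pw_cover (shift (card (set y)) a @ y) (shift (card (set z)) a @ z)"
proof -
  define k where "k = card (set z)"
  obtain c where c: "y = map (adj_swap c) z" "(c, Suc c) \<in> iInv z" "GSP y" "GSP z"
    using assms(1) pw_cover_iff by blast
  have cz: "c \<in> set z" "Suc c \<in> set z" "all_before z (Suc c) c"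
    using c(2) by (auto simp: iInv_iff)
  have ky: "card (set y) = k"
    using c(1) by (simp add: k_def card_image)
  have "Suc c \<le> k"
    using cz GSP_letter_bounds[OF c(4)] by (simp add: k_def)
  moreover have a_big: "\<forall>v\<in>set (shift k a). k < v"
    using GSP_letter_bounds[OF assms(2)] by (auto simp: set_shift Suc_le_eq)
  ultimately have "map (adj_swap c) (shift k a) = shift k a"
    by (intro map_idI) (fastforce simp: transpose_def)
  then have swap: "shift k a @ y = map (adj_swap c) (shift k a @ z)"
    using c(1) by simp
  have "c \<notin> set (shift k a)" "Suc c \<notin> set (shift k a)"
    using a_big \<open>Suc c \<le> k\<close> by fastforce+
  then have "(c, Suc c) \<in> iInv (shift k a @ z)"
    using cz by (simp add: iInv_iff all_before_append_right)
  moreover have "GSP (shift k a @ y)" "GSP (shift k a @ z)"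
    using GSP_shift_append[OF assms(2) c(3)] GSP_shift_append[OF assms(2) c(4)] ky
    by (simp_all add: k_def)
  ultimately show ?thesis
    using swap pw_cover_iff ky by (auto simp: k_def)
qed

lemma pw_le_shift_append:
  assumes "pw_le a a'" "pw_le b b'" "GSP a" "GSP b"
  shows "pw_le (shift (card (set b)) a @ b) (shift (card (set b)) a' @ b')"
proof -
  have "GSP a'"
    using pw_leD assms(1,3) by blast
  have "pw_le (shift (card (set b)) a @ b) (shift (card (set b)) a' @ b)"
    using pw_le_image[of "\<lambda>x. shift (card (set b)) x @ b" a a'] assms(1,4)
      pw_cover_shift_append_left pw_cover_imp_pw_le by blast
  also have "pw_le \<dots> (shift (card (set b')) a' @ b')"
    using pw_le_image[of "\<lambda>y. shift (card (set y)) a' @ y" b b'] assms(2) \<open>GSP a'\<close>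
      pw_cover_shift_append_right pw_cover_imp_pw_le by blast
  finally show ?thesis
    using pw_le_card_set[OF assms(2)] by simp
qed

lemma exists_adjacent_across:
  fixes L R :: "nat set"
  assumes "L \<inter> R = {}" "L \<union> R = {1..m}" "x \<in> L" "y \<in> R" "x < y"
  shows "\<exists>x'\<in>L. Suc x' \<in> R"
  using assms(3-5)
proof (induction "y - x" arbitrary: x rule: less_induct)
  case less
  show ?case
  proof (cases "Suc x \<in> R")
    case False
    have "y \<in> {1..m}"
      using less.prems assms(2) by blast
    then have "Suc x \<in> {1..m}"
      using less.prems by auto
    then have "Suc x \<in> L"
      using False assms(2) by blast
    moreover have "Suc x < y"
      using False less.prems by (metis le_neq_implies_less Suc_leI)
    ultimately show ?thesis
      using less.hyps[of "Suc x"] less.prems by simp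
  qed (use less.prems in blast)
qed

lemma pw_cover_adj_swap_across:
  assumes u: "GSP u" and x: "x \<in> set (take i u)" "Suc x \<in> set (drop i u)"
    and disjoint: "set (take i u) \<inter> set (drop i u) = {}"
  shows "pw_cover u (map (adj_swap x) u)"
proof -
  define w where "w = map (adj_swap x) u"
  have "x \<in> set u" "Suc x \<in> set u"
    using x set_take_Un_drop[of i u] by blast+
  then have set_w: "set w = set u"
    by (simp add: w_def)
  have "strict_mono_on (set (take i u)) (adj_swap x)" "strict_mono_on (set (drop i u)) (adj_swap x)"
    using x disjoint by (auto intro!: strict_mono_on_adj_swap)
  then have "stirling (take i w)" "stirling (drop i w)"
    using u by (simp_all add: w_def take_map drop_map stirling_map_strict_mono GSP_stirling
      stirling_take stirling_drop)
  moreover have "set (take i w) \<inter> set (drop i w) = {}"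
    using disjoint by (simp add: w_def take_map drop_map image_Int[OF inj_transpose, symmetric])
  ultimately have "stirling w"
    using stirling_append_disjoint[of "take i w" "drop i w"] by simp
  then have "GSP w"
    using u unfolding GSP_iff_stirling_packed packed_def set_w by blast
  have "all_before w (Suc x) x"
    unfolding all_before_def
  proof (intro allI impI)
    fix p q assume "p < length w" "q < length w" "w ! p = Suc x" "w ! q = x"
    then have "u ! p = x" "u ! q = Suc x" "p < length u" "q < length u"
      by (auto simp: w_def transpose_eq_iff)
    then have "\<not> i \<le> p" "\<not> q < i"
      using x disjoint nth_in_set_take[of q i u] nth_in_set_drop[of i p u] by auto
    then show "p < q"
      by simp
  qed
  then have "(x, Suc x) \<in> iInv w"
    using \<open>x \<in> set u\<close> \<open>Suc x \<in> set u\<close> set_w by (simp add: iInv_iff)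
  moreover have "u = map (adj_swap x) w"
    by (simp add: w_def comp_def)
  ultimately show ?thesis
    unfolding w_def[symmetric] using pw_cover_iff u \<open>GSP w\<close> by blast
qed

lemma sum_image_adj_swap:
  assumes "finite L" "x \<in> L" "Suc x \<notin> L"
  shows "\<Sum>(adj_swap x ` L) = Suc (\<Sum>L)"
proof -
  have "sum (adj_swap x) (L - {x}) = \<Sum>(L - {x})"
    using assms(3) by (intro sum.cong) (auto simp: transpose_def)
  then have "sum (adj_swap x) L = Suc x + \<Sum>(L - {x})" "\<Sum>L = x + \<Sum>(L - {x})"
    using assms(1,2) by (simp_all add: sum.remove)
  then show ?thesis
    by (simp add: sum.reindex)
qed

lemma factors_map_adj_swap_across:
  assumes "x \<in> set (take i u)" "Suc x \<in> set (drop i u)" "set (take i u) \<inter> set (drop i u) = {}"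
  defines "w \<equiv> map (adj_swap x) u"
  shows "set (take i w) = adj_swap x ` set (take i u)"
    and "set (take i w) \<inter> set (drop i w) = {}"
    and "pack (take i w) = pack (take i u)" "pack (drop i w) = pack (drop i u)"
    and "card (set (drop i w)) = card (set (drop i u))"
proof -
  have "strict_mono_on (set (take i u)) (adj_swap x)" "strict_mono_on (set (drop i u)) (adj_swap x)"
    using assms(1-3) by (auto intro!: strict_mono_on_adj_swap)
  then show "pack (take i w) = pack (take i u)" "pack (drop i w) = pack (drop i u)"
    by (simp_all add: w_def take_map drop_map pack_map_strict_mono)
  show "set (take i w) = adj_swap x ` set (take i u)"
    by (simp add: w_def take_map)
  show "set (take i w) \<inter> set (drop i w) = {}"
    using assms(3) by (simp add: w_def take_map drop_map image_Int[OF inj_transpose, symmetric])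
  show "card (set (drop i w)) = card (set (drop i u))"
    by (simp add: w_def drop_map card_image)
qed

text \<open>Bubbling letters of the left factor upwards past those of the right factor reaches the
  word with a global descent at the split; the sum of the left letters measures the progress.\<close>
lemma pw_le_shift_pack_split:
  assumes "GSP u" "set (take i u) \<inter> set (drop i u) = {}"
  shows "pw_le u (shift (card (set (drop i u))) (pack (take i u)) @ pack (drop i u))"
  using assms
proof (induction "\<Sum>{1..card (set u)} - \<Sum>(set (take i u))" arbitrary: u rule: less_induct)
  case less
  define L R where "L = set (take i u)" and "R = set (drop i u)"
  have LR: "L \<union> R = {1..card (set u)}" "L \<inter> R = {}"
    using GSP_set[OF less.prems(1)] set_take_Un_drop[of i u] less.prems(2) by (simp_all add: L_def R_def)
  show ?case
  proof (cases "global_descent i u")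
    case True
    then show ?thesis
      using global_descent_decomp[OF less.prems(1)] by simp
  next
    case False
    then obtain x0 y0 where "x0 \<in> L" "y0 \<in> R" "\<not> y0 < x0"
      unfolding global_descent_def L_def R_def by blast
    then have "x0 < y0"
      using LR(2) by (metis disjoint_iff linorder_neqE_nat)
    then obtain x where x: "x \<in> L" "Suc x \<in> R"
      using exists_adjacent_across[OF LR(2,1) \<open>x0 \<in> L\<close> \<open>y0 \<in> R\<close>] by blast
    define w where "w = map (adj_swap x) u"
    note w = factors_map_adj_swap_across[OF x[unfolded L_def R_def] less.prems(2), folded w_def]
    have cover: "pw_cover u w"
      using pw_cover_adj_swap_across less.prems x by (simp add: w_def L_def R_def)
    then have "GSP w"
      using pw_cover_iff by blast
    have "x \<in> set u" "Suc x \<in> set u"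
      using x set_take_Un_drop[of i u] by (auto simp: L_def R_def)
    then have "set (take i w) \<subseteq> {1..card (set u)}"
      using set_take_Un_drop[of i w] GSP_set[OF less.prems(1)] by (auto simp: w_def)
    then have "\<Sum>(set (take i w)) \<le> \<Sum>{1..card (set u)}"
      by (intro sum_mono2) auto
    moreover have "\<Sum>(set (take i w)) = Suc (\<Sum>L)"
      using x LR(2) w(1) sum_image_adj_swap[of L x] by (auto simp: L_def)
    moreover have "card (set w) = card (set u)"
      by (simp add: w_def card_image)
    ultimately have "\<Sum>{1..card (set w)} - \<Sum>(set (take i w)) < \<Sum>{1..card (set u)} - \<Sum>L"
      by simp
    then have "pw_le w (shift (card (set (drop i w))) (pack (take i w)) @ pack (drop i w))"
      using less.hyps \<open>GSP w\<close> w(2) by (simp add: L_def)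
    then show ?thesis
      using cover pw_cover_imp_pw_le pw_le_trans w(3-5) by metis
  qed
qed

definition upset :: "nat list \<Rightarrow> nat list set" where
  "upset u = {v. GSP v \<and> pw_le u v}"

definition global_descents :: "nat list \<Rightarrow> nat set" where
  "global_descents v = {j. j \<le> length v \<and> global_descent j v}"

definition factor_pair :: "nat list \<times> nat \<Rightarrow> nat \<times> nat list \<times> nat list" where
  "factor_pair vj = (snd vj, pack (take (snd vj) (fst vj)), pack (drop (snd vj) (fst vj)))"

lemma disjoint_take_drop_iff_nth:
  "set (take j u) \<inter> set (drop j u) = {} \<longleftrightarrow>
     (\<forall>p q. p < j \<longrightarrow> j \<le> q \<longrightarrow> q < length u \<longrightarrow> u ! p \<noteq> u ! q)"
proof
  assume disjoint: "set (take j u) \<inter> set (drop j u) = {}"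
  show "\<forall>p q. p < j \<longrightarrow> j \<le> q \<longrightarrow> q < length u \<longrightarrow> u ! p \<noteq> u ! q"
  proof (intro allI impI)
    fix p q assume "p < j" "j \<le> q" "q < length u"
    then have "u ! p \<in> set (take j u)" "u ! q \<in> set (drop j u)"
      by (simp_all add: nth_in_set_take nth_in_set_drop)
    then show "u ! p \<noteq> u ! q"
      using disjoint by auto
  qed
next
  assume h: "\<forall>p q. p < j \<longrightarrow> j \<le> q \<longrightarrow> q < length u \<longrightarrow> u ! p \<noteq> u ! q"
  show "set (take j u) \<inter> set (drop j u) = {}"
  proof (rule ccontr)
    assume "set (take j u) \<inter> set (drop j u) \<noteq> {}"
    then obtain p q where "p < min j (length u)" "q < length u - j" "u ! p = u ! (j + q)"
      by (auto simp: in_set_conv_nth)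
    then show False
      using h[rule_format, of p "j + q"] by simp
  qed
qed

lemma splits_same_pattern:
  assumes "same_pattern u v"
  shows "j \<in> splits u \<longleftrightarrow> j \<in> splits v"
proof -
  have "length u = length v" "\<And>p q. p < length u \<Longrightarrow> q < length u \<Longrightarrow> u ! p = u ! q \<longleftrightarrow> v ! p = v ! q"
    using assms by (auto simp: same_pattern_def)
  then show ?thesis
    unfolding splits_def disjoint_take_drop_iff_nth by (auto dest: le_less_trans)
qed

lemma finite_global_descents: "finite (global_descents v)"
  by (rule finite_subset[of _ "{0..length v}"]) (auto simp: global_descents_def)

lemma finite_splits: "finite (splits u)"
  by (rule finite_subset[of _ "{0..length u}"]) (auto simp: splits_def)

lemma factor_pair_in_upsets:
  assumes u: "GSP u" and v: "v \<in> upset u" and j: "j \<in> global_descents v"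
  shows "factor_pair (v, j) \<in> Sigma (splits u) (\<lambda>i. upset (pack (take i u)) \<times> upset (pack (drop i u)))"
proof -
  have "GSP v" "pw_le u v"
    using v by (auto simp: upset_def)
  then have "j \<in> splits u"
    using j pw_leD[OF _ u] splits_same_pattern global_descent_disjoint
    by (fastforce simp: global_descents_def splits_def)
  moreover have "pack (take j v) \<in> upset (pack (take j u))" "pack (drop j v) \<in> upset (pack (drop j u))"
    using \<open>GSP v\<close> \<open>pw_le u v\<close> pw_le_pack_take pw_le_pack_drop GSP_pack_take GSP_pack_drop
    by (auto simp: upset_def)
  ultimately show ?thesis
    by (simp add: factor_pair_def)
qed

lemma inj_on_factor_pair: "inj_on factor_pair (Sigma (upset u) global_descents)"
proof (rule inj_onI)
  fix x y assume x: "x \<in> Sigma (upset u) global_descents" and y: "y \<in> Sigma (upset u) global_descents"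
    and eq: "factor_pair x = factor_pair y"
  obtain v j v' j' where [simp]: "x = (v, j)" "y = (v', j')"
    by (cases x, cases y)
  have [simp]: "j' = j"
    using eq by (simp add: factor_pair_def)
  have packs: "pack (take j v) = pack (take j v')" "pack (drop j v) = pack (drop j v')"
    using eq by (simp_all add: factor_pair_def)
  have "GSP v" "GSP v'" "global_descent j v" "global_descent j v'"
    using x y by (auto simp: upset_def global_descents_def)
  moreover have "card (set (drop j v)) = card (set (drop j v'))"
    using packs(2) card_set_pack by metis
  ultimately have "v = v'"
    using global_descent_decomp packs by metis
  then show "x = y"
    by simp
qed

lemma factor_pair_surj:
  assumes u: "GSP u" and i: "i \<in> splits u"
    and a: "a \<in> upset (pack (take i u))" and b: "b \<in> upset (pack (drop i u))"
  shows "(i, a, b) \<in> factor_pair ` Sigma (upset u) global_descents"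
proof -
  have split: "i \<le> length u" "set (take i u) \<inter> set (drop i u) = {}"
    using i by (auto simp: splits_def)
  have a': "GSP a" "pw_le (pack (take i u)) a" and b': "GSP b" "pw_le (pack (drop i u)) b"
    using a b by (auto simp: upset_def)
  have "length a = i"
    using pw_le_length[OF a'(2) GSP_pack_take[OF u]] split(1) by simp
  define k where "k = card (set (drop i u))"
  have k: "card (set (pack (drop i u))) = k" "card (set b) = k"
    using pw_le_card_set[OF b'(2)] by (simp_all add: k_def card_set_pack)
  define v where "v = shift k a @ b"
  have "pw_le u (shift k (pack (take i u)) @ pack (drop i u))"
    using pw_le_shift_pack_split[OF u split(2)] by (simp add: k_def)
  also have "pw_le \<dots> v"
    using pw_le_shift_append[OF a'(2) b'(2) GSP_pack_take[OF u] GSP_pack_drop[OF u]] k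
    by (simp add: v_def)
  finally have v_up: "v \<in> upset u"
    using GSP_shift_append[OF a'(1) b'(1)] k by (simp add: upset_def v_def)
  have take_v: "take i v = shift k a" and drop_v: "drop i v = b"
    using \<open>length a = i\<close> by (simp_all add: v_def)
  have "global_descent i v"
    unfolding global_descent_def take_v drop_v
  proof (intro ballI)
    fix x y assume "x \<in> set (shift k a)" "y \<in> set b"
    then obtain x0 where "x0 \<in> set a" "x = x0 + k"
      by (auto simp: set_shift)
    then show "y < x"
      using GSP_letter_bounds[OF a'(1) \<open>x0 \<in> set a\<close>] GSP_letter_bounds[OF b'(1) \<open>y \<in> set b\<close>] k(2)
      by simp
  qed
  then have "(v, i) \<in> Sigma (upset u) global_descents"
    using v_up \<open>length a = i\<close> by (simp add: global_descents_def v_def)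
  moreover have "factor_pair (v, i) = (i, a, b)"
  proof -
    have "pack (shift k a) = a"
      using pack_map_strict_mono[of a "\<lambda>x. x + k"] GSP_pack_eq[OF a'(1)]
      by (simp add: shift_def strict_mono_on_def)
    then show ?thesis
      using take_v drop_v GSP_pack_eq[OF b'(1)] by (simp add: factor_pair_def)
  qed
  ultimately show ?thesis
    by (metis rev_image_eqI)
qed

lemma bij_betw_factor_pair:
  assumes "GSP u"
  shows "bij_betw factor_pair (Sigma (upset u) global_descents)
           (Sigma (splits u) (\<lambda>i. upset (pack (take i u)) \<times> upset (pack (drop i u))))"
proof -
  have "factor_pair ` Sigma (upset u) global_descents \<subseteq>
      Sigma (splits u) (\<lambda>i. upset (pack (take i u)) \<times> upset (pack (drop i u)))"
    using factor_pair_in_upsets[OF assms] by blast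
  moreover have "Sigma (splits u) (\<lambda>i. upset (pack (take i u)) \<times> upset (pack (drop i u))) \<subseteq>
      factor_pair ` Sigma (upset u) global_descents"
    using factor_pair_surj[OF assms] by blast
  ultimately show ?thesis
    unfolding bij_betw_def using inj_on_factor_pair by blast
qed

section \<open>Moebius inversion on finite graded posets\<close>

lemma graded_downward_induct:
  fixes h :: "'x \<Rightarrow> nat"
  assumes "finite S"
    and graded: "\<And>x y. x \<in> S \<Longrightarrow> y \<in> S \<Longrightarrow> le x y \<Longrightarrow> x \<noteq> y \<Longrightarrow> h x < h y"
    and step: "\<And>x. x \<in> S \<Longrightarrow> (\<And>y. y \<in> S \<Longrightarrow> le x y \<Longrightarrow> y \<noteq> x \<Longrightarrow> P y) \<Longrightarrow> P x"
    and "x \<in> S"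
  shows "P x"
  using assms(4)
proof (induction "Max (h ` S) - h x" arbitrary: x rule: less_induct)
  case less
  show ?case
  proof (rule step[OF less.prems])
    fix y assume y: "y \<in> S" "le x y" "y \<noteq> x"
    then have "h x < h y" "h y \<le> Max (h ` S)"
      using graded less.prems \<open>finite S\<close> by auto
    then show "P y"
      using less.hyps y by simp
  qed
qed

lemma upper_sums_eq_imp_eq:
  fixes g g' :: "'x \<Rightarrow> 'b::ab_group_add" and h :: "'x \<Rightarrow> nat"
  assumes "finite S"
    and graded: "\<And>x y. x \<in> S \<Longrightarrow> y \<in> S \<Longrightarrow> le x y \<Longrightarrow> x \<noteq> y \<Longrightarrow> h x < h y"
    and refl: "\<And>x. x \<in> S \<Longrightarrow> le x x"
    and sums: "\<And>x. x \<in> S \<Longrightarrow> (\<Sum>y\<in>{y\<in>S. le x y}. g y) = (\<Sum>y\<in>{y\<in>S. le x y}. g' y)"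
    and "x \<in> S"
  shows "g x = g' x"
proof (rule graded_downward_induct[of S le h, OF assms(1) graded _ assms(5)])
  fix x assume x: "x \<in> S" and IH: "\<And>y. y \<in> S \<Longrightarrow> le x y \<Longrightarrow> y \<noteq> x \<Longrightarrow> g y = g' y"
  define U where "U = {y\<in>S. le x y}"
  have "finite U" "x \<in> U"
    using \<open>finite S\<close> refl x by (simp_all add: U_def)
  moreover have "(\<Sum>y\<in>U - {x}. g y) = (\<Sum>y\<in>U - {x}. g' y)"
    using IH by (intro sum.cong) (auto simp: U_def)
  ultimately show "g x = g' x"
    using sums[OF x] by (simp add: U_def[symmetric] sum.remove)
qed

lemma upper_sums_solvable:
  fixes f :: "'x \<Rightarrow> 'b::ab_group_add" and h :: "'x \<Rightarrow> nat"
  assumes "finite S"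
    and "\<And>x y. x \<in> S \<Longrightarrow> y \<in> S \<Longrightarrow> le x y \<Longrightarrow> x \<noteq> y \<Longrightarrow> h x < h y"
    and "\<And>x. x \<in> S \<Longrightarrow> le x x"
  shows "\<exists>g. \<forall>x\<in>S. f x = (\<Sum>y\<in>{y\<in>S. le x y}. g y)"
  using assms
proof (induction "card S" arbitrary: S)
  case (Suc n)
  then have "h ` S \<noteq> {}"
    by auto
  then obtain x0 where x0: "x0 \<in> S" "\<And>y. y \<in> S \<Longrightarrow> h x0 \<le> h y"
    using Min_in[of "h ` S"] Suc.prems(1) by (metis Min_le finite_imageI image_iff imageI)
  define S' where "S' = S - {x0}"
  have "n = card S'"
    using Suc.hyps(2) Suc.prems(1) x0(1) by (simp add: S'_def)
  then obtain g' where g': "\<forall>x\<in>S'. f x = (\<Sum>y\<in>{y\<in>S'. le x y}. g' y)"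
    using Suc.hyps(1)[of S'] Suc.prems by (auto simp: S'_def)
  define g where "g = g'(x0 := f x0 - (\<Sum>y\<in>{y\<in>S'. le x0 y}. g' y))"
  have "f x = (\<Sum>y\<in>{y\<in>S. le x y}. g y)" if x: "x \<in> S" for x
  proof (cases "x = x0")
    case True
    have "{y\<in>S. le x0 y} = insert x0 {y\<in>S'. le x0 y}"
      using x0(1) Suc.prems(3) by (auto simp: S'_def)
    moreover have "(\<Sum>y\<in>{y\<in>S'. le x0 y}. g y) = (\<Sum>y\<in>{y\<in>S'. le x0 y}. g' y)"
      by (rule sum.cong) (auto simp: g_def S'_def)
    ultimately show ?thesis
      using True Suc.prems(1) by (simp add: g_def S'_def)
  next
    case False
    have "{y\<in>S. le x y} = {y\<in>S'. le x y}"
      using x0 x False Suc.prems(2)[of x x0] by (fastforce simp: S'_def)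
    moreover have "(\<Sum>y\<in>{y\<in>S'. le x y}. g y) = (\<Sum>y\<in>{y\<in>S'. le x y}. g' y)"
      by (rule sum.cong) (auto simp: g_def S'_def)
    ultimately show ?thesis
      using g' x False by (simp add: S'_def)
  qed
  then show ?case
    by blast
qed simp

section \<open>The monomial basis and its coproduct\<close>

definition GSPs :: "nat \<Rightarrow> nat list set" where
  "GSPs n = {v. GSP v \<and> length v = n}"

lemma finite_GSPs: "finite (GSPs n)"
proof -
  have "GSPs n \<subseteq> {xs. set xs \<subseteq> {0..n} \<and> length xs = n}"
  proof
    fix v assume "v \<in> GSPs n"
    then have "GSP v" "length v = n"
      by (auto simp: GSPs_def)
    moreover have "\<forall>x\<in>set v. x \<le> length v"
      using GSP_letter_bounds[OF \<open>GSP v\<close>] card_length order.trans by blast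
    ultimately show "v \<in> {xs. set xs \<subseteq> {0..n} \<and> length xs = n}"
      by auto
  qed
  moreover have "finite {xs. set xs \<subseteq> {0..n} \<and> length xs = n}"
    by (rule finite_lists_length_eq) simp
  ultimately show ?thesis
    by (rule finite_subset)
qed

lemma upset_eq: "GSP u \<Longrightarrow> upset u = {v \<in> GSPs (length u). pw_le u v}"
  using pw_leD pw_le_length by (auto simp: upset_def GSPs_def)

lemma finite_upset: "GSP u \<Longrightarrow> finite (upset u)"
  by (simp add: upset_eq finite_GSPs)

lemma card_iInv_strict_mono_on_GSPs:
  "x \<in> GSPs n \<Longrightarrow> y \<in> GSPs n \<Longrightarrow> pw_le x y \<Longrightarrow> x \<noteq> y \<Longrightarrow> card (iInv x) < card (iInv y)"
  using pw_leD by (auto simp: GSPs_def)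

lemma pw_le_refl_on: "x \<in> S \<Longrightarrow> pw_le x x"
  by simp

lemma sum_fun_apply: "(\<Sum>i\<in>A. f i) x = (\<Sum>i\<in>A. f i x :: 'b::comm_monoid_add)"
  by (induction A rule: infinite_finite_induct) auto

definition monomial_family :: "(nat list \<Rightarrow> 'a::comm_ring_1 elt) \<Rightarrow> bool" where
  "monomial_family M \<longleftrightarrow> (\<forall>u. \<not> GSP u \<longrightarrow> M u = 0) \<and> (\<forall>u. GSP u \<longrightarrow> Fb u = (\<Sum>v\<in>upset u. M v))"

lemma Mb_eq_The_monomial_family: "Mb = (THE M. monomial_family M)"
  unfolding Mb_def monomial_family_def upset_def
  by (simp add: sum_fun_apply[symmetric] zero_fun_def)

text \<open>Existence and uniqueness of the monomial basis is Moebius inversion on each finite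
  graded poset of GSPs of a fixed degree, graded by the number of inversions.\<close>
lemma ex1_monomial_family: "\<exists>!M. monomial_family (M :: nat list \<Rightarrow> 'a::comm_ring_1 elt)"
proof -
  have "\<exists>g. \<forall>x\<in>GSPs n. (Fb x :: 'a elt) = (\<Sum>y\<in>{y\<in>GSPs n. pw_le x y}. g y)" for n
    by (rule upper_sums_solvable[OF finite_GSPs card_iInv_strict_mono_on_GSPs pw_le_refl_on])
  then obtain G where G: "\<And>n x. x \<in> GSPs n \<Longrightarrow> (Fb x :: 'a elt) = (\<Sum>y\<in>{y\<in>GSPs n. pw_le x y}. G n y)"
    by metis
  define M where "M u = (if GSP u then G (length u) u else 0)" for u
  have "Fb u = (\<Sum>v\<in>upset u. M v)" if "GSP u" for u
  proof -
    have "Fb u = (\<Sum>y\<in>{y\<in>GSPs (length u). pw_le u y}. G (length u) y)"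
      using G that by (simp add: GSPs_def)
    also have "\<dots> = (\<Sum>v\<in>upset u. M v)"
      unfolding upset_eq[OF that] by (rule sum.cong) (auto simp: M_def GSPs_def)
    finally show ?thesis .
  qed
  then have "monomial_family M"
    by (simp add: monomial_family_def M_def)
  moreover have "M' u = M u" if "monomial_family M'" for M' u
  proof (cases "GSP u")
    case True
    then have u: "u \<in> GSPs (length u)"
      by (simp add: GSPs_def)
    show ?thesis
    proof (rule upper_sums_eq_imp_eq[OF finite_GSPs card_iInv_strict_mono_on_GSPs pw_le_refl_on _ u])
      fix x assume x: "x \<in> GSPs (length u)"
      then have "GSP x" "length x = length u"
        by (auto simp: GSPs_def)
      moreover have "(\<Sum>y\<in>upset x. M' y) = Fb x" "(\<Sum>y\<in>upset x. M y) = Fb x"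
        using that \<open>monomial_family M\<close> \<open>GSP x\<close> by (simp_all add: monomial_family_def)
      ultimately show "(\<Sum>y\<in>{y\<in>GSPs (length u). pw_le x y}. M' y) = (\<Sum>y\<in>{y\<in>GSPs (length u). pw_le x y}. M y)"
        using upset_eq[of x] by simp
    qed
  qed (use that \<open>monomial_family M\<close> in \<open>simp add: monomial_family_def\<close>)
  ultimately show ?thesis
    by (intro ex1I[of _ M]) auto
qed

lemma monomial_family_Mb: "monomial_family (Mb :: nat list \<Rightarrow> 'a::comm_ring_1 elt)"
  unfolding Mb_eq_The_monomial_family by (rule theI'[OF ex1_monomial_family])

lemma Fb_eq_sum_Mb: "GSP u \<Longrightarrow> (Fb u :: 'a::comm_ring_1 elt) = (\<Sum>v\<in>upset u. Mb v)"
  using monomial_family_Mb[where 'a='a] unfolding monomial_family_def by blast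

lemma Mb_Nil: "(Mb [] :: 'a::comm_ring_1 elt) = Fb []"
proof -
  have "{v \<in> GSPs 0. pw_le [] v} = {[]}"
    using GSP_Nil by (auto simp: GSPs_def)
  then have "upset [] = {[]}"
    using upset_eq[OF GSP_Nil] by simp
  then show ?thesis
    using Fb_eq_sum_Mb[OF GSP_Nil, where 'a='a] by simp
qed

lemma Mb_support:
  assumes "GSP u" "(Mb u :: 'a::comm_ring_1 elt) w \<noteq> 0"
  shows "w \<in> GSPs (length u)"
proof (rule ccontr)
  assume w: "w \<notin> GSPs (length u)"
  have u: "u \<in> GSPs (length u)"
    using assms(1) by (simp add: GSPs_def)
  have "(Mb u :: 'a elt) w = 0"
  proof (rule upper_sums_eq_imp_eq[OF finite_GSPs card_iInv_strict_mono_on_GSPs pw_le_refl_on _ u,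
        where g' = "\<lambda>_. 0"])
    fix x assume x: "x \<in> GSPs (length u)"
    then have "GSP x" "length x = length u"
      by (auto simp: GSPs_def)
    then have "(\<Sum>y\<in>{y\<in>GSPs (length u). pw_le x y}. (Mb y :: 'a elt) w) = (\<Sum>y\<in>upset x. Mb y) w"
      using upset_eq[of x] by (simp add: sum_fun_apply)
    also have "\<dots> = Fb x w"
      using Fb_eq_sum_Mb[OF \<open>GSP x\<close>, where 'a='a] by simp
    also have "\<dots> = 0"
      using x w by (auto simp: Fb_def)
    finally show "(\<Sum>y\<in>{y\<in>GSPs (length u). pw_le x y}. (Mb y :: 'a elt) w) =
        (\<Sum>y\<in>{y\<in>GSPs (length u). pw_le x y}. 0)"
      by simp
  qed
  then show False
    using assms(2) by simp
qed

lemma Delta_eq_sum_support: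
  fixes x :: "'a::comm_ring_1 elt"
  assumes "finite A" "\<And>w. w \<in> A \<Longrightarrow> GSP w" "\<And>w. x w \<noteq> 0 \<Longrightarrow> w \<in> A"
  shows "Delta x = (\<lambda>pq. \<Sum>w\<in>A. x w * DeltaF w pq)"
proof
  fix pq
  have "{u. GSP u \<and> x u \<noteq> 0} \<subseteq> A"
    using assms(3) by blast
  then have "(\<Sum>u\<in>{u. GSP u \<and> x u \<noteq> 0}. x u * DeltaF u pq) = (\<Sum>w\<in>A. x w * DeltaF w pq)"
    by (rule sum.mono_neutral_left[OF assms(1)]) (use assms(2) in auto)
  then show "Delta x pq = (\<Sum>w\<in>A. x w * DeltaF w pq)"
    by (simp add: Delta_def)
qed

lemma Fb_support: "(Fb u :: 'a::comm_ring_1 elt) w \<noteq> 0 \<Longrightarrow> w = u"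
  by (simp add: Fb_def split: if_splits)

lemma Delta_Fb:
  assumes "GSP u"
  shows "Delta (Fb u :: 'a::comm_ring_1 elt) = DeltaF u"
proof -
  have "Delta (Fb u :: 'a elt) = (\<lambda>pq. \<Sum>w\<in>{u}. Fb u w * DeltaF w pq)"
    by (rule Delta_eq_sum_support) (use assms Fb_support in auto)
  then show ?thesis
    by (simp add: Fb_def)
qed

lemma sum_upset_Delta_Mb:
  assumes u: "GSP u"
  shows "(\<Sum>v\<in>upset u. Delta (Mb v :: 'a::comm_ring_1 elt)) = Delta (Fb u :: 'a elt)"
proof
  fix pq
  define A where "A = GSPs (length u)"
  have A: "finite A" "\<And>w. w \<in> A \<Longrightarrow> GSP w"
    by (simp add: A_def finite_GSPs, simp add: A_def GSPs_def)
  have Delta_Mb: "Delta (Mb v :: 'a elt) = (\<lambda>pq. \<Sum>w\<in>A. Mb v w * DeltaF w pq)" if "v \<in> upset u" for v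
  proof (rule Delta_eq_sum_support[OF A])
    fix w assume "(Mb v :: 'a elt) w \<noteq> 0"
    moreover have "GSP v" "length v = length u"
      using that upset_eq[OF u] by (auto simp: GSPs_def)
    ultimately show "w \<in> A"
      using Mb_support[of v w] by (simp add: A_def)
  qed
  have "u \<in> A"
    using u by (simp add: A_def GSPs_def)
  then have Delta_Fb: "Delta (Fb u :: 'a elt) = (\<lambda>pq. \<Sum>w\<in>A. Fb u w * DeltaF w pq)"
    by (intro Delta_eq_sum_support[OF A]) (auto dest: Fb_support)
  have "(\<Sum>v\<in>upset u. Delta (Mb v :: 'a elt)) pq = (\<Sum>v\<in>upset u. \<Sum>w\<in>A. (Mb v :: 'a elt) w * DeltaF w pq)"
    by (simp add: sum_fun_apply Delta_Mb)
  also have "\<dots> = (\<Sum>w\<in>A. (\<Sum>v\<in>upset u. (Mb v :: 'a elt) w) * DeltaF w pq)"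
    by (simp add: sum.swap[of _ "upset u"] sum_distrib_right)
  also have "\<dots> = (\<Sum>w\<in>A. (Fb u :: 'a elt) w * DeltaF w pq)"
    by (simp add: Fb_eq_sum_Mb[OF u, where 'a='a] sum_fun_apply)
  also have "\<dots> = Delta (Fb u :: 'a elt) pq"
    by (simp add: Delta_Fb)
  finally show "(\<Sum>v\<in>upset u. Delta (Mb v :: 'a elt)) pq = Delta (Fb u :: 'a elt) pq" .
qed

lemma tens_sum:
  "tens (\<Sum>a\<in>A. f a) (\<Sum>b\<in>B. g b) = (\<Sum>a\<in>A. \<Sum>b\<in>B. tens (f a) (g b) :: 'a::comm_ring_1 elt2)"
proof
  fix pq :: "nat list \<times> nat list"
  obtain p q where "pq = (p, q)"
    by (cases pq)
  then show "tens (\<Sum>a\<in>A. f a) (\<Sum>b\<in>B. g b) pq = (\<Sum>a\<in>A. \<Sum>b\<in>B. tens (f a) (g b) :: 'a elt2) pq"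
    by (simp add: tens_def sum_fun_apply sum_product)
qed

lemma DeltaF_eq_sum_tens:
  "(DeltaF u :: 'a::comm_ring_1 elt2) =
     (\<Sum>i\<in>splits u. tens (Fb (pack (take i u))) (Fb (pack (drop i u))))"
proof
  fix pq :: "nat list \<times> nat list"
  obtain p q where pq: "pq = (p, q)"
    by (cases pq)
  show "(DeltaF u :: 'a elt2) pq =
      (\<Sum>i\<in>splits u. tens (Fb (pack (take i u))) (Fb (pack (drop i u)))) pq"
    unfolding pq DeltaF_def tens_def Fb_def sum_fun_apply by (simp, rule sum.cong, auto)
qed

definition descent_coproduct :: "nat list \<Rightarrow> 'a::comm_ring_1 elt2" where
  "descent_coproduct v = (\<Sum>j\<in>global_descents v. tens (Mb (pack (take j v))) (Mb (pack (drop j v))))"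

text \<open>Summing the candidate coproduct of \<open>M_v\<close> over the upset of \<open>u\<close> gives the coproduct of
  \<open>F_u\<close>: reindex by the bijection \<open>factor_pair\<close> and expand \<open>F\<close> in the \<open>M\<close> basis.\<close>
lemma sum_upset_descent_coproduct:
  assumes u: "GSP u"
  shows "(\<Sum>v\<in>upset u. descent_coproduct v) = (Delta (Fb u) :: 'a::comm_ring_1 elt2)"
proof -
  define T :: "nat \<times> nat list \<times> nat list \<Rightarrow> 'a elt2" where
    "T t = tens (Mb (fst (snd t))) (Mb (snd (snd t)))" for t
  have "(\<Sum>v\<in>upset u. descent_coproduct v) = (\<Sum>v\<in>upset u. \<Sum>j\<in>global_descents v. T (factor_pair (v, j)))"
    by (simp add: descent_coproduct_def T_def factor_pair_def)
  also have "\<dots> = (\<Sum>vj\<in>Sigma (upset u) global_descents. T (factor_pair vj))"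
    by (subst sum.Sigma) (auto simp: finite_upset[OF u] finite_global_descents split_def)
  also have "\<dots> = (\<Sum>t\<in>Sigma (splits u) (\<lambda>i. upset (pack (take i u)) \<times> upset (pack (drop i u))). T t)"
    by (rule sum.reindex_bij_betw[OF bij_betw_factor_pair[OF u]])
  also have "\<dots> = (\<Sum>i\<in>splits u. \<Sum>ab\<in>upset (pack (take i u)) \<times> upset (pack (drop i u)). T (i, ab))"
  proof (subst sum.Sigma)
    show "\<forall>i\<in>splits u. finite (upset (pack (take i u)) \<times> upset (pack (drop i u)))"
      using finite_upset GSP_pack_take[OF u] GSP_pack_drop[OF u] by blast
  qed (simp_all add: finite_splits split_def)
  also have "\<dots> = (\<Sum>i\<in>splits u. tens (\<Sum>a\<in>upset (pack (take i u)). Mb a) (\<Sum>b\<in>upset (pack (drop i u)). Mb b))"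
    by (simp add: T_def sum.cartesian_product split_def tens_sum)
  also have "\<dots> = (\<Sum>i\<in>splits u. tens (Fb (pack (take i u))) (Fb (pack (drop i u))))"
    using Fb_eq_sum_Mb[OF GSP_pack_take[OF u], where 'a='a]
      Fb_eq_sum_Mb[OF GSP_pack_drop[OF u], where 'a='a] by simp
  also have "\<dots> = Delta (Fb u)"
    by (simp add: DeltaF_eq_sum_tens Delta_Fb[OF u])
  finally show ?thesis .
qed

lemma Delta_Mb:
  assumes u: "GSP u"
  shows "Delta (Mb u :: 'a::comm_ring_1 elt) = descent_coproduct u"
proof -
  have "u \<in> GSPs (length u)"
    using u by (simp add: GSPs_def)
  show ?thesis
  proof (rule upper_sums_eq_imp_eq[OF finite_GSPs card_iInv_strict_mono_on_GSPs pw_le_refl_on _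
        \<open>u \<in> GSPs (length u)\<close>])
    fix x assume "x \<in> GSPs (length u)"
    then have "GSP x" "{y \<in> GSPs (length u). pw_le x y} = upset x"
      using upset_eq by (auto simp: GSPs_def)
    then show "(\<Sum>y\<in>{y \<in> GSPs (length u). pw_le x y}. Delta (Mb y :: 'a elt)) =
        (\<Sum>y\<in>{y \<in> GSPs (length u). pw_le x y}. descent_coproduct y)"
      using sum_upset_Delta_Mb[OF \<open>GSP x\<close>, where 'a='a]
        sum_upset_descent_coproduct[OF \<open>GSP x\<close>, where 'a='a] by simp
  qed
qed

lemma GD_iff: "j \<in> GD u \<longleftrightarrow> 0 < j \<and> j < length u \<and> global_descent j u"
proof -
  have "(\<forall>a b. 1 \<le> a \<and> a \<le> j \<and> j < b \<and> b \<le> length u \<longrightarrow> u ! (b - 1) < u ! (a - 1)) \<longleftrightarrow>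
        (\<forall>p q. p < j \<longrightarrow> j \<le> q \<longrightarrow> q < length u \<longrightarrow> u ! q < u ! p)"
  proof (intro iffI allI impI)
    fix p q
    assume "\<forall>a b. 1 \<le> a \<and> a \<le> j \<and> j < b \<and> b \<le> length u \<longrightarrow> u ! (b - 1) < u ! (a - 1)"
      and "p < j" "j \<le> q" "q < length u"
    then show "u ! q < u ! p"
      by (metis One_nat_def Suc_le_eq diff_Suc_1 le_add1 plus_1_eq_Suc Suc_leI less_Suc_eq_le)
  next
    fix a b
    assume "\<forall>p q. p < j \<longrightarrow> j \<le> q \<longrightarrow> q < length u \<longrightarrow> u ! q < u ! p"
      and "1 \<le> a \<and> a \<le> j \<and> j < b \<and> b \<le> length u"
    moreover have "a - 1 < j" "j \<le> b - 1" "b - 1 < length u"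
      using calculation(2) by auto
    ultimately show "u ! (b - 1) < u ! (a - 1)"
      by blast
  qed
  then show ?thesis
    unfolding GD_def global_descent_iff_nth by auto
qed

lemma finite_GD: "finite (GD u)"
  by (rule finite_subset[of _ "{0..length u}"]) (auto simp: GD_def)

lemma global_descents_eq:
  "0 < length u \<Longrightarrow> global_descents u = insert 0 (insert (length u) (GD u))"
  by (auto simp: global_descents_def GD_iff global_descent_def)

lemma descent_coproduct_eq:
  assumes "GSP u" "0 < length u"
  shows "descent_coproduct u = tens (Mb []) (Mb u) + tens (Mb u) (Mb []) +
    (\<Sum>i\<in>GD u. tens (Mb (pack (take i u))) (Mb (pack (drop i u))) :: 'a::comm_ring_1 elt2)"
proof -
  have "0 \<notin> insert (length u) (GD u)" "length u \<notin> GD u"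
    using assms(2) by (auto simp: GD_iff)
  then show ?thesis
    using assms GSP_pack_eq[OF assms(1)]
    by (simp add: descent_coproduct_def global_descents_eq finite_GD add.assoc)
qed

theorem mainTheorem17:
  fixes u :: "nat list"
  assumes "GSP u" and "0 < length u"
  shows "(Delta_plus (Mb u) :: 'a::comm_ring_1 elt2) =
         (\<lambda>pq. \<Sum>i\<in>GD u. tens (Mb (pack (take i u))) (Mb (pack (drop i u))) pq)"
proof -
  have "Delta (Mb u :: 'a elt) = tens (Fb []) (Mb u) + tens (Mb u) (Fb []) +
      (\<Sum>i\<in>GD u. tens (Mb (pack (take i u))) (Mb (pack (drop i u))))"
    using Delta_Mb[OF assms(1), where 'a='a] descent_coproduct_eq[OF assms, where 'a='a] Mb_Nil[where 'a='a]
    by simp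
  then show ?thesis
    by (simp add: Delta_plus_def fun_eq_iff sum_fun_apply)
qed

end
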